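(* Let $\kappa$ be a cardinal. A liner $X$ is $\kappa$-ranked if and only if it has the $\kappa$-Exchange Property. In particular, a liner is ranked if and only if it has the Exchange Property.
   Context: A liner is a set $X$ of points with a family $\mathcal L$ of subsets called lines such that any two distinct points lie in a unique line and every line contains at least two points. For distinct $x,y$, $\overline{xy}$ is the line containing $x,y$; $\overline{xx}:=\{x\}$. A set $A\subseteq X$ is flat if $\overline{xy}\subseteq A$ for all distinct $x,y\in A$; the flat hull $\overline A$ is the smallest flat containing $A$. The rank $\|A\|$ of $A\subseteq X$ is the smallest cardinality $|B|$ of a set $B\subseteq X$ with $A\subseteq\overline B$. A liner is $\kappa$-ranked if any two flats $A\subseteq B\subseteq X$ of equal finite rank $\|A\|=\|B\|\le\kappa$ are equal; it is ranked if it is $\kappa$-ranked for every cardinal $\kappa$ (equivalently, any flats $A\subseteq B$ of equal finite rank coincide). A liner has the $\kappa$-Exchange Property if for every set $A\subseteq X$ with $|A|<\kappa$ and all points $x\in X$, $y\in\overline{A\cup\{x\}}\setminus\overline A$, we have $x\in\overline{A\cup\{y\}}$. It has the Exchange Property if for every flat $A$ and points $x\in X\setminus A$, $y\in\overline{A\cup\{x\}}\setminus A$, we have $x\in\overline{A\cup\{y\}}$. *)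

theory Defs
  imports Main
begin

definition liner :: "'a set \<Rightarrow> 'a set set \<Rightarrow> bool" where
  "liner X L \<longleftrightarrow>
     (\<forall>l\<in>L. l \<subseteq> X \<and> (\<exists>x\<in>l. \<exists>y\<in>l. x \<noteq> y)) \<and>
     (\<forall>x\<in>X. \<forall>y\<in>X. x \<noteq> y \<longrightarrow> (\<exists>!l. l \<in> L \<and> x \<in> l \<and> y \<in> l))"

definition line_through :: "'a set set \<Rightarrow> 'a \<Rightarrow> 'a \<Rightarrow> 'a set" where
  "line_through L x y = (if x = y then {x} else (THE l. l \<in> L \<and> x \<in> l \<and> y \<in> l))"

definition flat :: "'a set \<Rightarrow> 'a set set \<Rightarrow> 'a set \<Rightarrow> bool" where
  "flat X L A \<longleftrightarrow> A \<subseteq> X \<and> (\<forall>x\<in>A. \<forall>y\<in>A. x \<noteq> y \<longrightarrow> line_through L x y \<subseteq> A)"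

definition flat_hull :: "'a set \<Rightarrow> 'a set set \<Rightarrow> 'a set \<Rightarrow> 'a set" where
  "flat_hull X L A = \<Inter>{F. flat X L F \<and> A \<subseteq> F}"

definition finite_rank :: "'a set \<Rightarrow> 'a set set \<Rightarrow> 'a set \<Rightarrow> bool" where
  "finite_rank X L A \<longleftrightarrow> (\<exists>B. B \<subseteq> X \<and> finite B \<and> A \<subseteq> flat_hull X L B)"

definition frank :: "'a set \<Rightarrow> 'a set set \<Rightarrow> 'a set \<Rightarrow> nat" where
  "frank X L A = (LEAST n. \<exists>B. B \<subseteq> X \<and> finite B \<and> card B = n \<and> A \<subseteq> flat_hull X L B)"

text \<open>kappa-ranked, where the cardinal kappa is the cardinality of a set K (of any type).
 Finite rank n \<le> kappa is expressed as |{..<n}| \<le>o |K|.\<close>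
definition kappa_ranked :: "'k set \<Rightarrow> 'a set \<Rightarrow> 'a set set \<Rightarrow> bool" where
  "kappa_ranked K X L \<longleftrightarrow>
     (\<forall>A B. flat X L A \<and> flat X L B \<and> A \<subseteq> B \<and> finite_rank X L A \<and> finite_rank X L B \<and>
        frank X L A = frank X L B \<and> (card_of {..<frank X L B}, card_of K) \<in> ordLeq
        \<longrightarrow> A = B)"

definition ranked :: "'a set \<Rightarrow> 'a set set \<Rightarrow> bool" where
  "ranked X L \<longleftrightarrow>
     (\<forall>A B. flat X L A \<and> flat X L B \<and> A \<subseteq> B \<and> finite_rank X L A \<and> finite_rank X L B \<and>
        frank X L A = frank X L B \<longrightarrow> A = B)"

definition kappa_exchange :: "'k set \<Rightarrow> 'a set \<Rightarrow> 'a set set \<Rightarrow> bool" where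
  "kappa_exchange K X L \<longleftrightarrow>
     (\<forall>A. A \<subseteq> X \<and> (card_of A, card_of K) \<in> ordLess \<longrightarrow>
        (\<forall>x\<in>X. \<forall>y \<in> flat_hull X L (insert x A) - flat_hull X L A.
           x \<in> flat_hull X L (insert y A)))"

definition exchange :: "'a set \<Rightarrow> 'a set set \<Rightarrow> bool" where
  "exchange X L \<longleftrightarrow>
     (\<forall>A. flat X L A \<longrightarrow>
        (\<forall>x \<in> X - A. \<forall>y \<in> flat_hull X L (insert x A) - A.
           x \<in> flat_hull X L (insert y A)))"

end

theory Submission
  imports Defs
begin

(* Rankedness and exchange are both graded by a natural number n (flats of rank at most n, resp.
   finite sets of fewer than n points), and the graded versions coincide. Given exchange below n,
   the Steinitz exchange argument bounds every independent set by the size of any spanning set of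
   at most n points; so a flat A of rank r <= n is spanned by r independent points, and a point of
   a flat B of rank r with A < B would extend them to r + 1 independent points of B. Conversely, if
   y lies in <A, x> but not in <A>, the flats <A> < <A, y> <= <A, x> have ranks r < r + 1 = r + 1,
   so rankedness gives <A, y> = <A, x>. Since flat hulls are finitary, exchange for all finite sets
   is exchange for all sets, which settles the case of an infinite kappa. *)

definition flat_independent :: "'a set \<Rightarrow> 'a set set \<Rightarrow> 'a set \<Rightarrow> bool" where
  "flat_independent X L D \<longleftrightarrow> (\<forall>d\<in>D. d \<notin> flat_hull X L (D - {d}))"

definition exchange_below :: "'a set \<Rightarrow> 'a set set \<Rightarrow> nat \<Rightarrow> bool" where
  "exchange_below X L n \<longleftrightarrow> (\<forall>A x y. A \<subseteq> X \<and> finite A \<and> card A < n \<and> x \<in> X \<and>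
     y \<in> flat_hull X L (insert x A) - flat_hull X L A \<longrightarrow> x \<in> flat_hull X L (insert y A))"

definition ranked_upto :: "'a set \<Rightarrow> 'a set set \<Rightarrow> nat \<Rightarrow> bool" where
  "ranked_upto X L n \<longleftrightarrow> (\<forall>A B. flat X L A \<and> flat X L B \<and> A \<subseteq> B \<and>
     finite_rank X L A \<and> finite_rank X L B \<and> frank X L A = frank X L B \<and> frank X L B \<le> n
     \<longrightarrow> A = B)"

definition set_exchange :: "'a set \<Rightarrow> 'a set set \<Rightarrow> bool" where
  "set_exchange X L \<longleftrightarrow> (\<forall>A x y. A \<subseteq> X \<and> x \<in> X \<and>
     y \<in> flat_hull X L (insert x A) - flat_hull X L A \<longrightarrow> x \<in> flat_hull X L (insert y A))"

lemma exchange_belowD: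
  "exchange_below X L n \<Longrightarrow> A \<subseteq> X \<Longrightarrow> finite A \<Longrightarrow> card A < n \<Longrightarrow> x \<in> X \<Longrightarrow>
   y \<in> flat_hull X L (insert x A) \<Longrightarrow> y \<notin> flat_hull X L A \<Longrightarrow> x \<in> flat_hull X L (insert y A)"
  unfolding exchange_below_def by blast

lemma ranked_uptoD:
  "ranked_upto X L n \<Longrightarrow> flat X L A \<Longrightarrow> flat X L B \<Longrightarrow> A \<subseteq> B \<Longrightarrow> finite_rank X L A \<Longrightarrow>
   finite_rank X L B \<Longrightarrow> frank X L A = frank X L B \<Longrightarrow> frank X L B \<le> n \<Longrightarrow> A = B"
  unfolding ranked_upto_def by blast

lemma ranked_iff_ranked_upto: "ranked X L \<longleftrightarrow> (\<forall>n. ranked_upto X L n)"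
  unfolding ranked_def ranked_upto_def by blast

lemma flat_hull_subset: "A \<subseteq> flat_hull X L A"
  unfolding flat_hull_def by auto

lemma flat_hull_minimal: "flat X L F \<Longrightarrow> A \<subseteq> F \<Longrightarrow> flat_hull X L A \<subseteq> F"
  unfolding flat_hull_def by auto

lemma flat_hull_mono: "A \<subseteq> B \<Longrightarrow> flat_hull X L A \<subseteq> flat_hull X L B"
  unfolding flat_hull_def by auto

lemma flat_hull_eq: "flat X L F \<Longrightarrow> flat_hull X L F = F"
  using flat_hull_minimal[of X L F F] flat_hull_subset[of F X L] by auto

lemma frank_le_card: "B \<subseteq> X \<Longrightarrow> finite B \<Longrightarrow> A \<subseteq> flat_hull X L B \<Longrightarrow> frank X L A \<le> card B"
  unfolding frank_def by (rule Least_le) blast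

lemma obtain_frank_witness:
  assumes "finite_rank X L A"
  obtains B where "B \<subseteq> X" "finite B" "card B = frank X L A" "A \<subseteq> flat_hull X L B"
proof -
  let ?P = "\<lambda>n. \<exists>B. B \<subseteq> X \<and> finite B \<and> card B = n \<and> A \<subseteq> flat_hull X L B"
  have "\<exists>n. ?P n" using assms unfolding finite_rank_def by blast
  then have "?P (Least ?P)" by (rule LeastI_ex)
  then show ?thesis using that unfolding frank_def by blast
qed

lemma frank_mono:
  assumes "F \<subseteq> G" "finite_rank X L G"
  shows "frank X L F \<le> frank X L G"
proof -
  obtain B where "B \<subseteq> X" "finite B" "card B = frank X L G" "G \<subseteq> flat_hull X L B"
    using obtain_frank_witness[OF assms(2)] by blast
  then show ?thesis using frank_le_card[of B X F L] assms(1) by simp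
qed

lemma finite_rank_flat_hull: "B \<subseteq> X \<Longrightarrow> finite B \<Longrightarrow> finite_rank X L (flat_hull X L B)"
  unfolding finite_rank_def by blast

context
  fixes X :: "'a set" and L :: "'a set set"
  assumes liner: "liner X L"
begin

lemma flat_space: "flat X L X"
proof -
  have lines: "\<forall>l\<in>L. l \<subseteq> X"
    and unique: "\<forall>x\<in>X. \<forall>y\<in>X. x \<noteq> y \<longrightarrow> (\<exists>!l. l \<in> L \<and> x \<in> l \<and> y \<in> l)"
    using liner unfolding liner_def by (simp_all add: Ball_def)
  have "line_through L x y \<subseteq> X" if "x \<in> X" "y \<in> X" "x \<noteq> y" for x y
  proof -
    have "(THE l. l \<in> L \<and> x \<in> l \<and> y \<in> l) \<in> L"
      using theI'[OF unique[rule_format, OF that]] by (rule conjunct1)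
    then show ?thesis using lines \<open>x \<noteq> y\<close> unfolding line_through_def by simp
  qed
  then show ?thesis unfolding flat_def by blast
qed

lemma flat_hull_subset_space: "A \<subseteq> X \<Longrightarrow> flat_hull X L A \<subseteq> X"
  using flat_hull_minimal[OF flat_space] .

lemma flat_flat_hull:
  assumes "A \<subseteq> X"
  shows "flat X L (flat_hull X L A)"
  unfolding flat_def
proof (intro conjI ballI impI)
  show "flat_hull X L A \<subseteq> X" using flat_hull_subset_space[OF assms] .
  fix x y assume "x \<in> flat_hull X L A" "y \<in> flat_hull X L A" "x \<noteq> y"
  then have "line_through L x y \<subseteq> F" if "flat X L F" "A \<subseteq> F" for F
    using that unfolding flat_hull_def flat_def by blast
  then show "line_through L x y \<subseteq> flat_hull X L A"
    unfolding flat_hull_def by blast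
qed

lemma flat_hull_subset_flat_hull:
  "A \<subseteq> flat_hull X L B \<Longrightarrow> B \<subseteq> X \<Longrightarrow> flat_hull X L A \<subseteq> flat_hull X L B"
  using flat_hull_minimal[OF flat_flat_hull] by blast

lemma frank_flat_hull_insert_le:
  assumes "A \<subseteq> X" "finite A" "z \<in> X"
  shows "frank X L (flat_hull X L (insert z A)) \<le> Suc (frank X L (flat_hull X L A))"
proof -
  obtain C where C: "C \<subseteq> X" "finite C" "card C = frank X L (flat_hull X L A)"
    "flat_hull X L A \<subseteq> flat_hull X L C"
    using obtain_frank_witness finite_rank_flat_hull assms by metis
  have "A \<subseteq> flat_hull X L (insert z C)"
    using C(4) flat_hull_subset[of A X L] flat_hull_mono[of C "insert z C" X L] by blast
  then have "insert z A \<subseteq> flat_hull X L (insert z C)"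
    using flat_hull_subset[of "insert z C" X L] by blast
  then have "flat_hull X L (insert z A) \<subseteq> flat_hull X L (insert z C)"
    using C(1) \<open>z \<in> X\<close> by (intro flat_hull_subset_flat_hull) auto
  then have "frank X L (flat_hull X L (insert z A)) \<le> card (insert z C)"
    using C(1,2) \<open>z \<in> X\<close> by (intro frank_le_card) auto
  also have "\<dots> \<le> Suc (card C)" using C(2) by (simp add: card_insert_if)
  finally show ?thesis using C(3) by simp
qed

lemma flat_hull_finitary:
  assumes "A \<subseteq> X" "y \<in> flat_hull X L A"
  obtains F where "F \<subseteq> A" "finite F" "y \<in> flat_hull X L F"
proof -
  define U where "U = (\<Union>F\<in>{F. F \<subseteq> A \<and> finite F}. flat_hull X L F)"
  have "A \<subseteq> U"
  proof
    fix a assume "a \<in> A"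
    moreover have "a \<in> flat_hull X L {a}" using flat_hull_subset[of "{a}" X L] by blast
    ultimately show "a \<in> U" unfolding U_def by blast
  qed
  moreover have "flat X L U"
    unfolding flat_def
  proof (intro conjI ballI impI)
    show "U \<subseteq> X"
      unfolding U_def using assms(1) by (intro UN_least flat_hull_subset_space) auto
    fix u v assume "u \<in> U" "v \<in> U" "u \<noteq> v"
    then obtain F1 F2 where F: "F1 \<subseteq> A" "finite F1" "u \<in> flat_hull X L F1"
      "F2 \<subseteq> A" "finite F2" "v \<in> flat_hull X L F2"
      unfolding U_def by blast
    then have "u \<in> flat_hull X L (F1 \<union> F2)" "v \<in> flat_hull X L (F1 \<union> F2)"
      using flat_hull_mono[of F1 "F1 \<union> F2" X L] flat_hull_mono[of F2 "F1 \<union> F2" X L] by auto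
    moreover have "flat X L (flat_hull X L (F1 \<union> F2))"
      using F assms(1) by (intro flat_flat_hull) auto
    ultimately have "line_through L u v \<subseteq> flat_hull X L (F1 \<union> F2)"
      using \<open>u \<noteq> v\<close> unfolding flat_def by blast
    moreover have "F1 \<union> F2 \<subseteq> A" "finite (F1 \<union> F2)" using F by auto
    ultimately show "line_through L u v \<subseteq> U" unfolding U_def by blast
  qed
  ultimately have "flat_hull X L A \<subseteq> U" by (rule flat_hull_minimal[rotated])
  then show ?thesis using assms(2) that unfolding U_def by blast
qed

lemma exchange_below_replace:
  assumes ex: "exchange_below X L n" and S: "finite S" "S \<subseteq> X"
    and "finite T" "T \<subseteq> X" "card (S \<union> T) \<le> n"
    and "d \<in> flat_hull X L (S \<union> T)" and dS: "d \<notin> flat_hull X L S"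
  shows "\<exists>c\<in>T. c \<in> flat_hull X L (insert d (S \<union> T - {c}))"
  using assms(4-7)
proof (induction T rule: finite_induct)
  case empty
  then show ?case using dS by simp
next
  case (insert t T)
  show ?case
  proof (cases "d \<in> flat_hull X L (S \<union> T)")
    case True
    have "card (S \<union> T) \<le> card (S \<union> insert t T)"
      using S insert.hyps(1) by (intro card_mono) auto
    then obtain c where "c \<in> T" "c \<in> flat_hull X L (insert d (S \<union> T - {c}))"
      using insert.IH insert.prems(1,2) True by auto
    moreover have "flat_hull X L (insert d (S \<union> T - {c}))
        \<subseteq> flat_hull X L (insert d (S \<union> insert t T - {c}))"
      by (rule flat_hull_mono) auto
    ultimately show ?thesis by auto
  next
    case False
    have "t \<notin> S"
      using False insert.prems(3) by (auto simp: insert_absorb)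
    then have "card (S \<union> T) < card (S \<union> insert t T)"
      using S(1) insert.hyps by simp
    moreover have "d \<in> flat_hull X L (insert t (S \<union> T))" using insert.prems(3) by simp
    ultimately have "t \<in> flat_hull X L (insert d (S \<union> T))"
      using exchange_belowD[OF ex, of "S \<union> T" t d] S insert.hyps(1) insert.prems(1,2) False
      by simp
    moreover have "S \<union> insert t T - {t} = S \<union> T" using \<open>t \<notin> S\<close> insert.hyps(2) by auto
    ultimately show ?thesis by auto
  qed
qed

lemma flat_independent_card_le:
  assumes ex: "exchange_below X L n"
    and D: "flat_independent X L D" "finite D" "D \<subseteq> X"
  shows "finite C \<Longrightarrow> C \<subseteq> X \<Longrightarrow> card C \<le> n \<Longrightarrow> D \<subseteq> flat_hull X L C \<Longrightarrow> card D \<le> card C"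
proof (induction "card (D - C)" arbitrary: C)
  case 0
  then show ?case using D(2) by (simp add: card_mono)
next
  case (Suc k C)
  then obtain d where d: "d \<in> D" "d \<notin> C"
    by (metis Diff_iff card.empty ex_in_conv nat.distinct(1))
  have "flat_hull X L (C \<inter> D) \<subseteq> flat_hull X L (D - {d})"
    using d by (intro flat_hull_mono) auto
  then have "d \<notin> flat_hull X L (C \<inter> D)"
    using D(1) d(1) unfolding flat_independent_def by blast
  moreover have "C \<inter> D \<union> (C - D) = C" by blast
  ultimately obtain c where c: "c \<in> C - D" "c \<in> flat_hull X L (insert d (C - {c}))"
    using exchange_below_replace[OF ex, of "C \<inter> D" "C - D" d] Suc.prems d by auto
  define C' where "C' = insert d (C - {c})"
  have C': "finite C'" "C' \<subseteq> X" "card C' = card C"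
    using Suc.prems(1,2) c(1) d D(3) unfolding C'_def
    by (auto simp: card_insert_if) (metis Suc_pred card_gt_0_iff empty_iff)
  have "C \<subseteq> insert c C'" by (auto simp: C'_def)
  also have "insert c C' \<subseteq> flat_hull X L C'"
    using c(2) flat_hull_subset[of C' X L] by (simp add: C'_def)
  finally have "D \<subseteq> flat_hull X L C'"
    using Suc.prems(4) flat_hull_subset_flat_hull[OF _ C'(2)] by blast
  moreover have "D - C' = (D - C) - {d}" using c(1) by (auto simp: C'_def)
  then have "k = card (D - C')" using Suc.hyps(2) d D(2) by simp
  ultimately show ?case using Suc.hyps(1)[of C'] C' Suc.prems(3) by simp
qed

lemma flat_independent_insert:
  assumes ex: "exchange_below X L n"
    and D: "flat_independent X L D" "finite D" "D \<subseteq> X" "card D \<le> n"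
    and a: "a \<in> X" "a \<notin> flat_hull X L D"
  shows "flat_independent X L (insert a D)"
  unfolding flat_independent_def
proof
  fix e assume e: "e \<in> insert a D"
  have "a \<notin> D" using a flat_hull_subset[of D X L] by blast
  show "e \<notin> flat_hull X L (insert a D - {e})"
  proof (cases "e = a")
    case True
    then show ?thesis using \<open>a \<notin> D\<close> a by simp
  next
    case False
    with e have "e \<in> D" by simp
    show ?thesis
    proof
      assume "e \<in> flat_hull X L (insert a D - {e})"
      then have "e \<in> flat_hull X L (insert a (D - {e}))" using False by (simp add: insert_Diff_if)
      moreover have "e \<notin> flat_hull X L (D - {e})"
        using D(1) \<open>e \<in> D\<close> unfolding flat_independent_def by blast
      moreover have "card (D - {e}) < n"
        using D(2,4) \<open>e \<in> D\<close> by (meson card_Diff1_less order_less_le_trans)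
      ultimately have "a \<in> flat_hull X L (insert e (D - {e}))"
        using exchange_belowD[OF ex, of "D - {e}" a e] a D(2,3) by auto
      then show False using a \<open>e \<in> D\<close> by (simp add: insert_absorb)
    qed
  qed
qed

lemma obtain_flat_independent_basis:
  assumes ex: "exchange_below X L n" and A: "A \<subseteq> X"
    and C: "C \<subseteq> X" "finite C" "card C \<le> n" "A \<subseteq> flat_hull X L C"
  obtains D where "D \<subseteq> A" "finite D" "flat_independent X L D" "A \<subseteq> flat_hull X L D"
    "card D \<le> card C"
proof -
  let ?P = "\<lambda>D. D \<subseteq> A \<and> finite D \<and> flat_independent X L D"
  have bound: "card D \<le> card C" if "?P D" for D
  proof -
    have "D \<subseteq> flat_hull X L C" using that C(4) by blast
    then show ?thesis using flat_independent_card_le[OF ex, of D C] that A C(1-3) by blast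
  qed
  have "?P {}" unfolding flat_independent_def by simp
  moreover have "\<forall>D. ?P D \<longrightarrow> card D < Suc (card C)"
    using bound by (simp add: le_imp_less_Suc)
  ultimately obtain D where D: "?P D" and max: "\<And>D'. ?P D' \<Longrightarrow> card D' \<le> card D"
    using Lattices_Big.ex_has_greatest_nat[of ?P "{}" card "Suc (card C)"] by blast
  have "A \<subseteq> flat_hull X L D"
  proof
    fix a assume "a \<in> A"
    show "a \<in> flat_hull X L D"
    proof (rule ccontr)
      assume a: "a \<notin> flat_hull X L D"
      then have "a \<notin> D" using flat_hull_subset[of D X L] by blast
      have "card D \<le> n" using bound[OF D] C(3) by simp
      then have "flat_independent X L (insert a D)"
        using flat_independent_insert[OF ex, of D a] D A \<open>a \<in> A\<close> a by blast
      then have "card (insert a D) \<le> card D"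
        using max[of "insert a D"] D \<open>a \<in> A\<close> by blast
      then show False using \<open>a \<notin> D\<close> D by simp
    qed
  qed
  then show ?thesis using that D bound[OF D] by blast
qed

lemma exchange_below_imp_ranked_upto:
  assumes ex: "exchange_below X L n"
  shows "ranked_upto X L n"
  unfolding ranked_upto_def
proof (intro allI impI)
  fix A B
  assume "flat X L A \<and> flat X L B \<and> A \<subseteq> B \<and> finite_rank X L A \<and> finite_rank X L B \<and>
    frank X L A = frank X L B \<and> frank X L B \<le> n"
  then have A: "flat X L A" "finite_rank X L A" and B: "flat X L B" "finite_rank X L B"
    and "A \<subseteq> B" and rank_eq: "frank X L A = frank X L B" and "frank X L B \<le> n"
    by auto
  obtain CA where CA: "CA \<subseteq> X" "finite CA" "card CA = frank X L A" "A \<subseteq> flat_hull X L CA"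
    using obtain_frank_witness[OF A(2)] by blast
  obtain CB where CB: "CB \<subseteq> X" "finite CB" "card CB = frank X L B" "B \<subseteq> flat_hull X L CB"
    using obtain_frank_witness[OF B(2)] by blast
  have "A \<subseteq> X" "B \<subseteq> X" using A(1) B(1) unfolding flat_def by auto
  have "card CA \<le> n" using CA(3) rank_eq \<open>frank X L B \<le> n\<close> by simp
  obtain D where D: "D \<subseteq> A" "finite D" "flat_independent X L D" "A \<subseteq> flat_hull X L D"
    "card D \<le> card CA"
    using obtain_flat_independent_basis[OF ex \<open>A \<subseteq> X\<close> CA(1,2) \<open>card CA \<le> n\<close> CA(4)] .
  have "D \<subseteq> X" using D(1) \<open>A \<subseteq> X\<close> by blast
  have "frank X L A \<le> card D" using frank_le_card[OF \<open>D \<subseteq> X\<close> D(2,4)] .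
  have "B \<subseteq> A"
  proof
    fix b assume "b \<in> B"
    show "b \<in> A"
    proof (rule ccontr)
      assume "b \<notin> A"
      then have "b \<notin> flat_hull X L D" using flat_hull_minimal[OF A(1) D(1)] by blast
      moreover have "b \<in> X" using \<open>b \<in> B\<close> \<open>B \<subseteq> X\<close> by blast
      moreover have "card D \<le> n" using D(5) \<open>card CA \<le> n\<close> by simp
      ultimately have "flat_independent X L (insert b D)"
        using flat_independent_insert[OF ex D(3,2) \<open>D \<subseteq> X\<close>] by blast
      moreover have "insert b D \<subseteq> flat_hull X L CB"
        using D(1) \<open>A \<subseteq> B\<close> \<open>b \<in> B\<close> CB(4) by blast
      moreover have "finite (insert b D)" "insert b D \<subseteq> X" "card CB \<le> n"
        using D(2) \<open>D \<subseteq> X\<close> \<open>b \<in> X\<close> CB(3) \<open>frank X L B \<le> n\<close> by auto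
      ultimately have "card (insert b D) \<le> card CB"
        using flat_independent_card_le[OF ex, of "insert b D" CB] CB(1,2) by blast
      moreover have "b \<notin> D" using \<open>b \<notin> A\<close> D(1) by blast
      ultimately show False
        using D(2) CB(3) rank_eq \<open>frank X L A \<le> card D\<close> by simp
    qed
  qed
  then show "A = B" using \<open>A \<subseteq> B\<close> by blast
qed

lemma ranked_upto_imp_exchange_below:
  assumes rk: "ranked_upto X L n"
  shows "exchange_below X L n"
  unfolding exchange_below_def
proof (intro allI impI)
  fix A x y
  assume "A \<subseteq> X \<and> finite A \<and> card A < n \<and> x \<in> X \<and>
    y \<in> flat_hull X L (insert x A) - flat_hull X L A"
  then have A: "A \<subseteq> X" "finite A" "card A < n" and "x \<in> X"
    and yx: "y \<in> flat_hull X L (insert x A)" and yA: "y \<notin> flat_hull X L A" by auto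
  let ?H = "flat_hull X L A" and ?Hy = "flat_hull X L (insert y A)"
    and ?Hx = "flat_hull X L (insert x A)"
  have "y \<in> X" using yx flat_hull_subset_space A(1) \<open>x \<in> X\<close> by blast
  have "insert y A \<subseteq> ?Hx"
    using yx flat_hull_mono[of A "insert x A" X L] flat_hull_subset[of A X L] by auto
  then have "?Hy \<subseteq> ?Hx" using A(1) \<open>x \<in> X\<close> by (intro flat_hull_subset_flat_hull) auto
  have "?H \<subseteq> ?Hy" by (rule flat_hull_mono) auto
  have flats: "flat X L ?H" "flat X L ?Hy" "flat X L ?Hx"
    using flat_flat_hull A(1) \<open>x \<in> X\<close> \<open>y \<in> X\<close> by auto
  have finite_ranks: "finite_rank X L ?H" "finite_rank X L ?Hy" "finite_rank X L ?Hx"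
    using A \<open>x \<in> X\<close> \<open>y \<in> X\<close> by (auto intro: finite_rank_flat_hull)
  have "frank X L ?H \<le> card A" using frank_le_card[OF A(1,2)] by blast
  have Hy_le: "frank X L ?Hy \<le> Suc (frank X L ?H)" and Hx_le: "frank X L ?Hx \<le> Suc (frank X L ?H)"
    using frank_flat_hull_insert_le A(1,2) \<open>x \<in> X\<close> \<open>y \<in> X\<close> by auto
  have "frank X L ?H \<noteq> frank X L ?Hy"
  proof
    assume "frank X L ?H = frank X L ?Hy"
    then have "?H = ?Hy"
      using ranked_uptoD[OF rk flats(1,2) \<open>?H \<subseteq> ?Hy\<close> finite_ranks(1,2)]
        Hy_le \<open>frank X L ?H \<le> card A\<close> A(3) by linarith
    then show False using yA flat_hull_subset[of "insert y A" X L] by blast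
  qed
  moreover have "frank X L ?H \<le> frank X L ?Hy" "frank X L ?Hy \<le> frank X L ?Hx"
    using frank_mono \<open>?H \<subseteq> ?Hy\<close> \<open>?Hy \<subseteq> ?Hx\<close> finite_ranks by blast+
  ultimately have "frank X L ?Hy = frank X L ?Hx" "frank X L ?Hx \<le> n"
    using Hy_le Hx_le \<open>frank X L ?H \<le> card A\<close> A(3) by linarith+
  then have "?Hy = ?Hx" using ranked_uptoD[OF rk flats(2,3) \<open>?Hy \<subseteq> ?Hx\<close> finite_ranks(2,3)] by blast
  then show "x \<in> ?Hy" using flat_hull_subset[of "insert x A" X L] by blast
qed

lemma ranked_upto_iff_exchange_below: "ranked_upto X L n \<longleftrightarrow> exchange_below X L n"
  using exchange_below_imp_ranked_upto ranked_upto_imp_exchange_below by blast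

lemma all_exchange_below_iff_set_exchange: "(\<forall>n. exchange_below X L n) \<longleftrightarrow> set_exchange X L"
proof
  assume ex: "\<forall>n. exchange_below X L n"
  show "set_exchange X L"
    unfolding set_exchange_def
  proof (intro allI impI)
    fix A x y assume "A \<subseteq> X \<and> x \<in> X \<and> y \<in> flat_hull X L (insert x A) - flat_hull X L A"
    then have "A \<subseteq> X" "x \<in> X" and y: "y \<in> flat_hull X L (insert x A)" "y \<notin> flat_hull X L A"
      by auto
    obtain F where F: "F \<subseteq> insert x A" "finite F" "y \<in> flat_hull X L F"
      using flat_hull_finitary \<open>A \<subseteq> X\<close> \<open>x \<in> X\<close> y(1) by (metis insert_subset)
    let ?G = "F - {x}"
    have "y \<in> flat_hull X L (insert x ?G)" using F(3) flat_hull_mono[of F "insert x ?G"] by blast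
    moreover have "y \<notin> flat_hull X L ?G" using y(2) F(1) flat_hull_mono[of ?G A] by blast
    moreover have "?G \<subseteq> X" "finite ?G" using F(1,2) \<open>A \<subseteq> X\<close> by auto
    ultimately have "x \<in> flat_hull X L (insert y ?G)"
      using exchange_belowD[OF ex[rule_format] _ _ lessI \<open>x \<in> X\<close>] by blast
    then show "x \<in> flat_hull X L (insert y A)"
      using F(1) flat_hull_mono[of "insert y ?G" "insert y A"] by blast
  qed
next
  show "set_exchange X L \<Longrightarrow> \<forall>n. exchange_below X L n"
    unfolding set_exchange_def exchange_below_def by blast
qed

lemma exchange_iff_set_exchange: "exchange X L \<longleftrightarrow> set_exchange X L"
proof
  assume e: "exchange X L"
  show "set_exchange X L"
    unfolding set_exchange_def
  proof (intro allI impI)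
    fix A x y assume "A \<subseteq> X \<and> x \<in> X \<and> y \<in> flat_hull X L (insert x A) - flat_hull X L A"
    then have "A \<subseteq> X" "x \<in> X" and y: "y \<in> flat_hull X L (insert x A)" "y \<notin> flat_hull X L A"
      by auto
    let ?H = "flat_hull X L A"
    have "flat X L ?H" using flat_flat_hull \<open>A \<subseteq> X\<close> by blast
    have "x \<notin> ?H"
      using y flat_hull_minimal[OF \<open>flat X L ?H\<close>, of "insert x A"] flat_hull_subset[of A X L] by blast
    moreover have "y \<in> flat_hull X L (insert x ?H)"
      using y(1) flat_hull_mono[of "insert x A" "insert x ?H"] flat_hull_subset[of A X L] by blast
    ultimately have "x \<in> flat_hull X L (insert y ?H)"
      using e \<open>flat X L ?H\<close> \<open>x \<in> X\<close> y(2) unfolding exchange_def by blast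
    moreover have "insert y A \<subseteq> X" using y(1) flat_hull_subset_space \<open>A \<subseteq> X\<close> \<open>x \<in> X\<close> by blast
    then have "flat_hull X L (insert y ?H) \<subseteq> flat_hull X L (insert y A)"
      using flat_hull_mono[of A "insert y A" X L] flat_hull_subset[of "insert y A" X L]
      by (intro flat_hull_subset_flat_hull) auto
    ultimately show "x \<in> flat_hull X L (insert y A)" by blast
  qed
next
  assume "set_exchange X L"
  then show "exchange X L"
    unfolding set_exchange_def exchange_def flat_def
    by (metis Diff_iff flat_def flat_hull_eq)
qed

lemma ranked_iff_exchange: "ranked X L \<longleftrightarrow> exchange X L"
  using ranked_iff_ranked_upto ranked_upto_iff_exchange_below all_exchange_below_iff_set_exchange
    exchange_iff_set_exchange by blast

end

lemma card_of_ordLeq_finite_iff: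
  "finite A \<Longrightarrow> finite B \<Longrightarrow> (card_of A, card_of B) \<in> ordLeq \<longleftrightarrow> card A \<le> card B"
  using card_of_ordLeq[of A B] inj_on_iff_card_le[of A B] by simp

lemma card_of_ordLess_infinite: "finite A \<Longrightarrow> infinite B \<Longrightarrow> (card_of A, card_of B) \<in> ordLess"
  by (rule finite_ordLess_infinite)
    (auto simp: card_of_Well_order Field_card_of card_of_well_order_on)

lemma card_of_ordLess_finite_iff:
  "finite B \<Longrightarrow> (card_of A, card_of B) \<in> ordLess \<longleftrightarrow> finite A \<and> card A < card B"
  using not_ordLeq_iff_ordLess[OF card_of_Well_order card_of_Well_order, of B A]
    card_of_ordLeq_finite_iff[of B A] card_of_ordLess_infinite[of B A] ordLess_imp_ordLeq
  by (cases "finite A") auto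

lemma kappa_ranked_finite:
  assumes "finite K"
  shows "kappa_ranked K X L \<longleftrightarrow> ranked_upto X L (card K)"
proof -
  have "(card_of {..<m}, card_of K) \<in> ordLeq \<longleftrightarrow> m \<le> card K" for m :: nat
    using card_of_ordLeq_finite_iff[OF finite_lessThan assms] by simp
  then show ?thesis unfolding kappa_ranked_def ranked_upto_def by presburger
qed

lemma kappa_ranked_infinite: "infinite K \<Longrightarrow> kappa_ranked K X L \<longleftrightarrow> ranked X L"
  unfolding kappa_ranked_def ranked_def
  using card_of_ordLess_infinite[of "{..<_}" K] ordLess_imp_ordLeq by blast

lemma kappa_exchange_finite: "finite K \<Longrightarrow> kappa_exchange K X L \<longleftrightarrow> exchange_below X L (card K)"
  unfolding kappa_exchange_def exchange_below_def using card_of_ordLess_finite_iff[of K] by auto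

lemma kappa_exchange_infinite:
  assumes "liner X L" "infinite K"
  shows "kappa_exchange K X L \<longleftrightarrow> exchange X L"
proof -
  have "kappa_exchange K X L \<longleftrightarrow> set_exchange X L"
  proof
    assume "kappa_exchange K X L"
    then have "\<forall>n. exchange_below X L n"
      unfolding kappa_exchange_def exchange_below_def
      using card_of_ordLess_infinite[OF _ \<open>infinite K\<close>] by blast
    then show "set_exchange X L" using all_exchange_below_iff_set_exchange[OF assms(1)] by blast
  qed (auto simp: kappa_exchange_def set_exchange_def)
  then show ?thesis using exchange_iff_set_exchange[OF assms(1)] by blast
qed

theorem theorem2p3p5:
  fixes X :: "'a set" and L :: "'a set set" and K :: "'k set"
  assumes "liner X L"
  shows "(kappa_ranked K X L \<longleftrightarrow> kappa_exchange K X L) \<and> (ranked X L \<longleftrightarrow> exchange X L)"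
proof
  show ranked_exchange: "ranked X L \<longleftrightarrow> exchange X L" using ranked_iff_exchange[OF assms] .
  show "kappa_ranked K X L \<longleftrightarrow> kappa_exchange K X L"
  proof (cases "finite K")
    case True
    then show ?thesis
      using kappa_ranked_finite kappa_exchange_finite ranked_upto_iff_exchange_below[OF assms] by blast
  next
    case False
    then show ?thesis
      using kappa_ranked_infinite kappa_exchange_infinite[OF assms] ranked_exchange by blast
  qed
qed

end
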